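(* For every $\alpha\in[m,M]$, with $E_\alpha=\{x\in[s^{-1},1):\lambda(x)\le\alpha\}$, the function $x\mapsto \mathds{1}_{E_\alpha}(x)/x$ is Riemann integrable on $[s^{-1},1]$.
   Context: Fix integers $p\ge 3$ and $2\le s<p$, and a set $A\subset\{0,1,\dots,p-1\}$ with $\#A=s$. Let $h:\{0,1,\dots,s-1\}\to A$ be the unique strictly increasing bijection. For a positive integer $n$ with base-$s$ expansion $n=\sum_{i=0}^k\varepsilon_i s^i$ ($\varepsilon_i\in\{0,\dots,s-1\}$, $\varepsilon_k\ne 0$), put $a_n=\sum_{i=0}^k h(\varepsilon_i)p^i$, and put $a_0=h(0)$. Let $b_n=a_n/n^{\log_s p}$ for $n\ge1$, $m=\inf_{n\ge1}b_n$, $M=\sup_{n\ge1}b_n$. For real $x\ge0$ let $a(x)=a_{\lfloor x\rfloor}$, and for $x>0$ let $\lambda(x)=\lim_{k\to\infty}\frac{a(s^kx)}{(s^kx)^{\log_s p}}$ (this limit exists). $\mathds{1}_E$ denotes the indicator function of $E$ (extended by $0$ at $x=1$). *)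

theory Defs
  imports "HOL-Analysis.Analysis"
begin

definition hmap :: "nat set \<Rightarrow> nat \<Rightarrow> nat" where
  "hmap A i = sorted_list_of_set A ! i"

text \<open>a_n: replace the base-s digits of n by their h-images and read in base p.
  For n \<ge> 1 the digit positions are exactly {i. s^i \<le> n} = {0..k}; a_0 = h(0).\<close>
definition aseq :: "nat \<Rightarrow> nat \<Rightarrow> nat set \<Rightarrow> nat \<Rightarrow> nat" where
  "aseq p s A n = (if n = 0 then hmap A 0
     else (\<Sum>i\<in>{i. s ^ i \<le> n}. hmap A ((n div s ^ i) mod s) * p ^ i))"

definition bseq :: "nat \<Rightarrow> nat \<Rightarrow> nat set \<Rightarrow> nat \<Rightarrow> real" where
  "bseq p s A n = real (aseq p s A n) / (real n) powr (log (real s) (real p))"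

definition mInf :: "nat \<Rightarrow> nat \<Rightarrow> nat set \<Rightarrow> real" where
  "mInf p s A = (INF n\<in>{1..}. bseq p s A n)"

definition MSup :: "nat \<Rightarrow> nat \<Rightarrow> nat set \<Rightarrow> real" where
  "MSup p s A = (SUP n\<in>{1..}. bseq p s A n)"

definition areal :: "nat \<Rightarrow> nat \<Rightarrow> nat set \<Rightarrow> real \<Rightarrow> nat" where
  "areal p s A x = aseq p s A (nat \<lfloor>x\<rfloor>)"

definition lam :: "nat \<Rightarrow> nat \<Rightarrow> nat set \<Rightarrow> real \<Rightarrow> real" where
  "lam p s A x = lim (\<lambda>k. real (areal p s A (real s ^ k * x))
                        / (real s ^ k * x) powr (log (real s) (real p)))"

definition Eset :: "nat \<Rightarrow> nat \<Rightarrow> nat set \<Rightarrow> real \<Rightarrow> real set" where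
  "Eset p s A \<alpha> = {x \<in> {1 / real s..<1}. lam p s A x \<le> \<alpha>}"

definition riemann_integrable :: "(real \<Rightarrow> real) \<Rightarrow> real \<Rightarrow> real \<Rightarrow> bool" where
  "riemann_integrable f a b \<longleftrightarrow>
     (\<exists>I. \<forall>\<epsilon>>0. \<exists>\<delta>>0. \<forall>(n::nat) (x::nat \<Rightarrow> real) (t::nat \<Rightarrow> real).
        (0 < n \<and> x 0 = a \<and> x n = b \<and>
         (\<forall>i<n. x i < x (Suc i) \<and> x (Suc i) - x i < \<delta> \<and> x i \<le> t i \<and> t i \<le> x (Suc i)))
        \<longrightarrow> \<bar>(\<Sum>i<n. f (t i) * (x (Suc i) - x i)) - I\<bar> < \<epsilon>)"

end

theory Submission
  imports Defs
begin

text \<open>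
  Put \<open>\<gamma> = log\<^sub>s p\<close>.  For \<open>n = \<lfloor>s\<^sup>k x\<rfloor>\<close> and every \<open>N\<close> with \<open>N div s\<^sup>r = n\<close> the digit
  substitution satisfies \<open>p\<^sup>r a\<^sub>n \<le> a\<^sub>N < p\<^sup>r (a\<^sub>n + 1)\<close>; hence \<open>\<lambda>(x)\<close> lies in the interval
  \<open>[a\<^sub>n / (n+1)\<^sup>\<gamma>, (a\<^sub>n + 1) / n\<^sup>\<gamma>]\<close>, whose length is \<open>O(1/n)\<close>.  So the indicator of \<open>E\<^sub>\<alpha>\<close> is
  constant on every \<open>s\<close>-adic block \<open>[n/s\<^sup>k, (n+1)/s\<^sup>k)\<close> except on the bad blocks, whose
  interval contains \<open>\<alpha>\<close>.  Among the blocks whose indices share their leading \<open>j\<close> digits,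
  \<open>a\<^sub>n\<close> varies by less than \<open>p\<^sup>r\<close> (with \<open>r = k - j\<close>) while \<open>\<alpha> n\<^sup>\<gamma>\<close> grows with slope of
  order \<open>\<alpha> (p/s)\<^sup>k\<close>, so the proportion of bad blocks is \<open>O((s/p)\<^sup>j/\<alpha> + s\<^sup>-\<^sup>r)\<close>.  The
  discontinuities of \<open>\<one>\<^bsub>E\<^sub>\<alpha>\<^esub>(x)/x\<close> are therefore covered by finitely many intervals of
  arbitrarily small total length, which gives Riemann integrability.
\<close>

lemma nat_floor_bounds:
  fixes y :: real assumes "0 \<le> y"
  shows "real (nat \<lfloor>y\<rfloor>) \<le> y" "y < real (nat \<lfloor>y\<rfloor>) + 1"
  using assms by (simp_all add: of_nat_nat)

lemma nat_floor_less:
  fixes y :: real assumes "0 \<le> y" "y < real M"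
  shows "nat \<lfloor>y\<rfloor> < M"
  using assms by (simp add: nat_less_iff floor_less_iff)

lemma quotient_gap_le:
  fixes a n g :: real and P G :: nat
  assumes n: "1 \<le> n" and a: "0 \<le> a" "a \<le> P * n powr g" and g: "1 \<le> g" "g \<le> real G"
  shows "(a + 1) / n powr g - a / (n + 1) powr g \<le> (1 + P * G) / n"
proof -
  define u where "u = n powr g"
  define v where "v = (n + 1) powr g"
  have u0: "0 < u" using n unfolding u_def by simp
  have uv: "u \<le> v" unfolding u_def v_def using n g by (intro powr_mono2) auto
  have v0: "0 < v" using u0 uv by simp
  have un: "n \<le> u" unfolding u_def using powr_mono[of 1 g n] n g by simp
  have q01: "0 \<le> n / (n+1)" "n / (n+1) \<le> 1" using n by auto
  have "1 + real G * (- 1 / (n+1)) \<le> (1 + (- 1 / (n+1))) ^ G"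
    using n by (intro Bernoulli_inequality) (simp add: field_simps)
  also have "(1 + (- 1 / (n+1))) ^ G = (n / (n+1)) powr real G"
    using n by (simp add: powr_realpow field_simps)
  also have "\<dots> \<le> (n / (n+1)) powr g" using powr_mono'[OF g(2) q01] .
  also have "\<dots> = u / v" unfolding u_def v_def using n by (simp add: powr_divide)
  finally have "(v - u) / v \<le> real G / (n+1)" using v0 by (simp add: diff_divide_distrib)
  also have "\<dots> \<le> real G / n" using n by (simp add: frac_le)
  finally have vu: "(v - u) / v \<le> real G / n" .
  have au: "a / u \<le> real P" using a u0 unfolding u_def by (simp add: divide_le_eq)
  have "(a + 1) / u - a / v = 1 / u + (a / u) * ((v - u) / v)"
    using u0 v0 by (simp add: field_simps)
  also have "\<dots> \<le> 1 / n + real P * (real G / n)"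
  proof (rule add_mono)
    show "1 / u \<le> 1 / n" using un n by (simp add: frac_le)
    show "a / u * ((v - u) / v) \<le> real P * (real G / n)"
      using au vu a u0 uv v0 by (intro mult_mono) auto
  qed
  also have "\<dots> = (1 + P * G) / n" by (simp add: add_divide_distrib)
  finally show ?thesis unfolding u_def v_def .
qed

lemma card_le_of_spread:
  fixes S :: "nat set" and D :: real
  assumes fin: "finite S" and D0: "0 \<le> D"
    and spread: "\<And>a b. a \<in> S \<Longrightarrow> b \<in> S \<Longrightarrow> a < b \<Longrightarrow> real b - real a - 1 < D"
  shows "real (card S) \<le> D + 2"
proof (cases "S = {}")
  case True thus ?thesis using D0 by simp
next
  case False
  define m where "m = Min S"
  have mS: "m \<in> S" unfolding m_def using fin False by simp
  have sub: "S \<subseteq> {m..m + 1 + nat \<lfloor>D\<rfloor>}"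
  proof
    fix b assume b: "b \<in> S"
    have mb: "m \<le> b" unfolding m_def using fin b by simp
    have "real b - real m - 1 \<le> D"
      using spread[OF mS b] mb D0 by (cases "m < b") auto
    hence "int b - int m - 1 \<le> \<lfloor>D\<rfloor>" by (simp add: le_floor_iff)
    thus "b \<in> {m..m + 1 + nat \<lfloor>D\<rfloor>}" using mb by simp
  qed
  have "card S \<le> card {m..m + 1 + nat \<lfloor>D\<rfloor>}" using sub by (intro card_mono) auto
  hence "real (card S) \<le> 2 + real (nat \<lfloor>D\<rfloor>)" by simp
  also have "real (nat \<lfloor>D\<rfloor>) \<le> D" using D0 by linarith
  finally show ?thesis by simp
qed

lemma powr_diff_ge:
  fixes u v g :: real
  assumes u: "0 < u" "u \<le> v" and g: "1 \<le> g"
  shows "(v - u) * u powr (g - 1) \<le> v powr g - u powr g"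
proof -
  have "u powr (g - 1) \<le> v powr (g - 1)" using u g by (intro powr_mono2) auto
  hence "v * u powr (g - 1) \<le> v * v powr (g - 1)" using u by simp
  moreover have "v * v powr (g - 1) = v powr g" "u * u powr (g - 1) = u powr g"
    using u by (simp_all add: powr_mult_base)
  ultimately show ?thesis by (simp add: algebra_simps)
qed

lemma indicator_div_diff_le:
  fixes E :: "real set"
  assumes "0 < c" "c \<le> t" "c \<le> y" "t \<in> E \<longleftrightarrow> y \<in> E"
  shows "\<bar>indicator E t / t - indicator E y / y\<bar> \<le> \<bar>t - y\<bar> / c\<^sup>2"
proof -
  have "\<bar>indicator E t / t - indicator E y / y\<bar> \<le> \<bar>1 / t - 1 / y\<bar>"
    using assms(4) by (simp add: indicator_def)
  also have "\<dots> = \<bar>t - y\<bar> / (t * y)" using assms by (simp add: field_simps abs_minus_commute)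
  also have "\<dots> \<le> \<bar>t - y\<bar> / c\<^sup>2"
    using assms by (intro divide_left_mono) (auto simp: power2_eq_square intro: mult_mono)
  finally show ?thesis .
qed

section \<open>A criterion for Riemann integrability\<close>

lemma partition_le:
  fixes x :: "nat \<Rightarrow> real"
  assumes "\<forall>i<n. x i < x (Suc i)" "i \<le> j" "j \<le> n"
  shows "x i \<le> x j"
  using lift_Suc_mono_le_ivl[of "{..<n}" x i j] assms by fastforce

lemma integral_sum_partition:
  fixes x :: "nat \<Rightarrow> real" and f :: "real \<Rightarrow> real"
  assumes "\<forall>i<n. x i < x (Suc i)" and "f integrable_on {x 0..x n}"
  shows "integral {x 0..x n} f = (\<Sum>i<n. integral {x i..x (Suc i)} f)"
  using assms
proof (induction n)
  case (Suc n)
  have inc: "\<forall>i<n. x i < x (Suc i)" using Suc.prems by simp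
  have le: "x 0 \<le> x n" "x n \<le> x (Suc n)" using partition_le[OF Suc.prems(1)] by auto
  hence "f integrable_on {x 0..x n}" using integrable_subinterval_real[OF Suc.prems(2)] by auto
  thus ?case
    using Henstock_Kurzweil_Integration.integral_combine[OF le Suc.prems(2)] Suc.IH[OF inc] by simp
qed simp

lemma riemann_sum_piece_le:
  fixes f \<psi> :: "real \<Rightarrow> real"
  assumes "t \<in> {c..d}" "f integrable_on {c..d}" "\<psi> integrable_on {c..d}"
    and "\<And>y. y \<in> {c..d} \<Longrightarrow> \<bar>f t - f y\<bar> \<le> \<psi> y"
  shows "\<bar>f t * (d - c) - integral {c..d} f\<bar> \<le> integral {c..d} \<psi>"
proof -
  have const: "(\<lambda>y. f t) integrable_on {c..d}" by (rule integrable_const_ivl)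
  have "f t * (d - c) - integral {c..d} f = integral {c..d} (\<lambda>y. f t - f y)"
    using assms(1) by (subst integral_diff[OF const assms(2)]) (simp add: mult.commute)
  also have "norm \<dots> \<le> integral {c..d} \<psi>"
    using integrable_diff[OF const assms(2)] assms(3,4)
    by (intro Henstock_Kurzweil_Integration.integral_norm_bound_integral) auto
  finally show ?thesis by simp
qed

lemma riemann_sum_error_le:
  fixes f \<psi> :: "real \<Rightarrow> real" and x t :: "nat \<Rightarrow> real"
  assumes ends: "x 0 = a" "x n = b"
    and part: "\<forall>i<n. x i < x (Suc i) \<and> x (Suc i) - x i < \<delta> \<and> x i \<le> t i \<and> t i \<le> x (Suc i)"
    and f: "f integrable_on {a..b}" and \<psi>: "\<psi> integrable_on {a..b}"
    and close: "\<forall>t\<in>{a..b}. \<forall>y\<in>{a..b}. \<bar>t - y\<bar> < \<delta> \<longrightarrow> \<bar>f t - f y\<bar> \<le> \<psi> y"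
  shows "\<bar>(\<Sum>i<n. f (t i) * (x (Suc i) - x i)) - integral {a..b} f\<bar> \<le> integral {a..b} \<psi>"
proof -
  have inc: "\<forall>i<n. x i < x (Suc i)" using part by simp
  have piece: "\<bar>f (t i) * (x (Suc i) - x i) - integral {x i..x (Suc i)} f\<bar> \<le> integral {x i..x (Suc i)} \<psi>"
    if i: "i < n" for i
  proof -
    have sub: "{x i..x (Suc i)} \<subseteq> {a..b}"
      using partition_le[OF inc, of 0 i] partition_le[OF inc, of "Suc i" n] i ends by auto
    have ti: "t i \<in> {x i..x (Suc i)}" using part i by auto
    show ?thesis
    proof (rule riemann_sum_piece_le[OF ti])
      show "f integrable_on {x i..x (Suc i)}" "\<psi> integrable_on {x i..x (Suc i)}"
        using integrable_subinterval_real[OF f sub] integrable_subinterval_real[OF \<psi> sub] .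
      fix y assume y: "y \<in> {x i..x (Suc i)}"
      have "\<bar>t i - y\<bar> < \<delta>" using part i y by force
      thus "\<bar>f (t i) - f y\<bar> \<le> \<psi> y" using close sub y ti by blast
    qed
  qed
  have "\<bar>(\<Sum>i<n. f (t i) * (x (Suc i) - x i)) - integral {a..b} f\<bar>
      = \<bar>\<Sum>i<n. f (t i) * (x (Suc i) - x i) - integral {x i..x (Suc i)} f\<bar>"
    using integral_sum_partition[OF inc] f ends by (simp add: sum_subtractf)
  also have "\<dots> \<le> (\<Sum>i<n. integral {x i..x (Suc i)} \<psi>)"
    by (rule order_trans[OF sum_abs sum_mono]) (simp add: piece)
  also have "\<dots> = integral {a..b} \<psi>" using integral_sum_partition[OF inc] \<psi> ends by simp
  finally show ?thesis .
qed

lemma riemann_integrable_if_oscillation_integrable: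
  fixes f :: "real \<Rightarrow> real"
  assumes ab: "a < b" and f: "f integrable_on {a..b}"
    and osc: "\<And>e. 0 < e \<Longrightarrow> \<exists>\<delta>>0. \<exists>\<omega>. \<omega> integrable_on {a..b} \<and> integral {a..b} \<omega> \<le> e \<and>
        (\<forall>t\<in>{a..b}. \<forall>y\<in>{a..b}. \<bar>t - y\<bar> < \<delta> \<longrightarrow> \<bar>f t - f y\<bar> \<le> \<omega> y + e)"
  shows "riemann_integrable f a b"
  unfolding riemann_integrable_def
proof (rule exI[of _ "integral {a..b} f"], intro allI impI)
  fix \<epsilon> :: real assume \<epsilon>: "0 < \<epsilon>"
  define e where "e = \<epsilon> / (2 * (1 + (b - a)))"
  have "0 < e" unfolding e_def using \<epsilon> ab by simp
  then obtain \<delta> \<omega> where \<delta>: "0 < \<delta>" and \<omega>: "\<omega> integrable_on {a..b}" "integral {a..b} \<omega> \<le> e"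
    and close: "\<forall>t\<in>{a..b}. \<forall>y\<in>{a..b}. \<bar>t - y\<bar> < \<delta> \<longrightarrow> \<bar>f t - f y\<bar> \<le> \<omega> y + e"
    using osc by blast
  define \<psi> where "\<psi> y = \<omega> y + e" for y
  have \<psi>: "\<psi> integrable_on {a..b}" unfolding \<psi>_def using \<omega> by (intro integrable_add) auto
  have "integral {a..b} \<psi> = integral {a..b} \<omega> + e * (b - a)"
    unfolding \<psi>_def using \<omega> ab by (subst integral_add) auto
  also have "\<dots> \<le> \<epsilon> / 2" using \<omega> ab unfolding e_def by (simp add: field_simps)
  finally have int_\<psi>: "integral {a..b} \<psi> < \<epsilon>" using \<epsilon> by simp
  show "\<exists>\<delta>>0. \<forall>(n::nat) (x::nat \<Rightarrow> real) (t::nat \<Rightarrow> real).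
        (0 < n \<and> x 0 = a \<and> x n = b \<and>
         (\<forall>i<n. x i < x (Suc i) \<and> x (Suc i) - x i < \<delta> \<and> x i \<le> t i \<and> t i \<le> x (Suc i)))
        \<longrightarrow> \<bar>(\<Sum>i<n. f (t i) * (x (Suc i) - x i)) - integral {a..b} f\<bar> < \<epsilon>"
  proof (intro exI[of _ \<delta>] conjI allI impI \<delta>)
    fix n :: nat and x t :: "nat \<Rightarrow> real"
    assume "0 < n \<and> x 0 = a \<and> x n = b \<and>
         (\<forall>i<n. x i < x (Suc i) \<and> x (Suc i) - x i < \<delta> \<and> x i \<le> t i \<and> t i \<le> x (Suc i))"
    hence "\<bar>(\<Sum>i<n. f (t i) * (x (Suc i) - x i)) - integral {a..b} f\<bar> \<le> integral {a..b} \<psi>"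
      using close unfolding \<psi>_def by (intro riemann_sum_error_le[OF _ _ _ f \<psi>[unfolded \<psi>_def]]) auto
    thus "\<bar>(\<Sum>i<n. f (t i) * (x (Suc i) - x i)) - integral {a..b} f\<bar> < \<epsilon>" using int_\<psi> by simp
  qed
qed

lemma riemann_integrable_if_oscillation_small:
  fixes f :: "real \<Rightarrow> real"
  assumes ab: "a < b" and f: "f integrable_on {a..b}" and B: "\<And>x. x \<in> {a..b} \<Longrightarrow> \<bar>f x\<bar> \<le> B"
    and osc: "\<And>e. 0 < e \<Longrightarrow> \<exists>\<delta>>0. \<exists>U\<in>lmeasurable. measure lebesgue U \<le> e \<and>
        (\<forall>t\<in>{a..b}. \<forall>y\<in>{a..b} - U. \<bar>t - y\<bar> < \<delta> \<longrightarrow> \<bar>f t - f y\<bar> \<le> e)"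
  shows "riemann_integrable f a b"
proof (rule riemann_integrable_if_oscillation_integrable[OF ab f])
  fix e :: real assume e: "0 < e"
  have B0: "0 \<le> B" using B[of a] ab by auto
  define e' where "e' = e / (2 * B + 1)"
  have e': "0 < e'" "e' \<le> e" "2 * B * e' \<le> e"
    using e B0 unfolding e'_def by (auto simp: field_simps)
  obtain \<delta> U where \<delta>: "0 < \<delta>" and U: "U \<in> lmeasurable" "measure lebesgue U \<le> e'"
    and close: "\<forall>t\<in>{a..b}. \<forall>y\<in>{a..b} - U. \<bar>t - y\<bar> < \<delta> \<longrightarrow> \<bar>f t - f y\<bar> \<le> e'"
    using osc[OF e'(1)] by blast
  have UI: "U \<inter> {a..b} \<in> lmeasurable" using U(1) by (intro fmeasurable.Int) auto
  define \<omega> where "\<omega> y = 2 * B * indicator U y" for y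
  show "\<exists>\<delta>>0. \<exists>\<omega>. \<omega> integrable_on {a..b} \<and> integral {a..b} \<omega> \<le> e \<and>
        (\<forall>t\<in>{a..b}. \<forall>y\<in>{a..b}. \<bar>t - y\<bar> < \<delta> \<longrightarrow> \<bar>f t - f y\<bar> \<le> \<omega> y + e)"
  proof (intro exI[of _ \<delta>] exI[of _ \<omega>] conjI ballI impI \<delta>)
    show "\<omega> integrable_on {a..b}"
      unfolding \<omega>_def using integrable_on_cmult_left[OF integrable_on_indicator[THEN iffD2, OF UI]] by simp
    have "integral {a..b} \<omega> = 2 * B * measure lebesgue (U \<inter> {a..b})"
      unfolding \<omega>_def using integral_indicator[OF UI] by simp
    also have "\<dots> \<le> 2 * B * e'"
      using measure_mono_fmeasurable[of "U \<inter> {a..b}" U lebesgue] U UI B0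
      by (intro mult_left_mono) (auto dest: fmeasurableD)
    finally show "integral {a..b} \<omega> \<le> e" using e' by simp
    fix t y assume t: "t \<in> {a..b}" and y: "y \<in> {a..b}" and ty: "\<bar>t - y\<bar> < \<delta>"
    show "\<bar>f t - f y\<bar> \<le> \<omega> y + e"
    proof (cases "y \<in> U")
      case True thus ?thesis using B[OF t] B[OF y] e unfolding \<omega>_def by simp
    next
      case False thus ?thesis using close t y ty e' unfolding \<omega>_def by force
    qed
  qed
qed

section \<open>The digit substitution\<close>

lemma hmap_mem:
  assumes "finite A" "d < card A" shows "hmap A d \<in> A"
  using assms unfolding hmap_def
  by (metis length_sorted_list_of_set nth_mem set_sorted_list_of_set)

lemma hmap_pos:
  assumes "finite A" "d < card A" "1 \<le> d" shows "1 \<le> hmap A d"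
proof -
  have "sorted_list_of_set A ! 0 < sorted_list_of_set A ! d"
    using sorted_wrt_nth_less[of "(<)" "sorted_list_of_set A" 0 d] assms by simp
  thus ?thesis unfolding hmap_def by simp
qed

lemma finite_digit_positions:
  assumes "2 \<le> s" shows "finite {i. s ^ i \<le> (N::nat)}"
proof (rule finite_subset)
  show "{i. s ^ i \<le> N} \<subseteq> {..N}"
  proof
    fix i assume "i \<in> {i. s ^ i \<le> N}"
    hence "s ^ i \<le> N" by simp
    moreover have "i < 2 ^ i" by (rule less_exp)
    moreover have "2 ^ i \<le> s ^ i" using assms by (simp add: power_mono)
    ultimately show "i \<in> {..N}" by (simp only: atMost_iff)
  qed
qed simp

lemma aseq_digit:
  assumes "1 \<le> N" "N < s" shows "aseq p s A N = hmap A N"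
proof -
  have "{i. s ^ i \<le> N} = {0}"
  proof (intro set_eqI iffI)
    fix i assume i: "i \<in> {i. s ^ i \<le> N}"
    show "i \<in> {0}"
    proof (rule ccontr)
      assume "i \<notin> {0}"
      hence "s \<le> s ^ i" using assms by (simp add: self_le_power)
      thus False using i assms by simp
    qed
  qed (use assms in simp)
  thus ?thesis using assms unfolding aseq_def by simp
qed

lemma aseq_div_mod:
  assumes "2 \<le> s" "s \<le> N"
  shows "aseq p s A N = p * aseq p s A (N div s) + hmap A (N mod s)"
proof -
  have N1: "1 \<le> N div s" using assms by (simp add: less_eq_div_iff_mult_less_eq)
  have pos_Suc: "s ^ Suc j \<le> N \<longleftrightarrow> s ^ j \<le> N div s" for j
    using assms by (simp add: less_eq_div_iff_mult_less_eq mult.commute)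
  have positions: "{i. s ^ i \<le> N} = insert 0 (Suc ` {i. s ^ i \<le> N div s})"
  proof (intro set_eqI iffI)
    fix i assume "i \<in> {i. s ^ i \<le> N}"
    thus "i \<in> insert 0 (Suc ` {i. s ^ i \<le> N div s})"
      using pos_Suc by (cases i) auto
  qed (use assms pos_Suc in auto)
  have fin: "finite {i. s ^ i \<le> N div s}" using finite_digit_positions assms by blast
  have "aseq p s A N = (\<Sum>i\<in>insert 0 (Suc ` {i. s ^ i \<le> N div s}). hmap A ((N div s ^ i) mod s) * p ^ i)"
    using assms unfolding aseq_def positions by simp
  also have "\<dots> = hmap A (N mod s) + (\<Sum>i\<in>Suc ` {i. s ^ i \<le> N div s}. hmap A ((N div s ^ i) mod s) * p ^ i)"
    using fin by (subst sum.insert) auto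
  also have "(\<Sum>i\<in>Suc ` {i. s ^ i \<le> N div s}. hmap A ((N div s ^ i) mod s) * p ^ i)
      = (\<Sum>i\<in>{i. s ^ i \<le> N div s}. hmap A ((N div s ^ Suc i) mod s) * p ^ Suc i)"
    by (subst sum.reindex) auto
  also have "(\<Sum>i\<in>{i. s ^ i \<le> N div s}. hmap A ((N div s ^ Suc i) mod s) * p ^ Suc i)
      = p * (\<Sum>i\<in>{i. s ^ i \<le> N div s}. hmap A ((N div s div s ^ i) mod s) * p ^ i)"
    by (simp add: sum_distrib_left div_mult2_eq mult_ac)
  also have "(\<Sum>i\<in>{i. s ^ i \<le> N div s}. hmap A ((N div s div s ^ i) mod s) * p ^ i) = aseq p s A (N div s)"
    using N1 unfolding aseq_def by simp
  finally show ?thesis by simp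
qed

locale digit_substitution =
  fixes p s :: nat and A :: "nat set"
  assumes s_ge2: "2 \<le> s" and s_less_p: "s < p" and A_subset: "A \<subseteq> {0..<p}" and card_A: "card A = s"
begin

lemma finite_A: "finite A"
  using card_A s_ge2 card.infinite by fastforce

lemma hmap_less: "d < s \<Longrightarrow> hmap A d < p"
  using hmap_mem[OF finite_A, of d] card_A A_subset by auto

lemma hmap_ge_1: "1 \<le> d \<Longrightarrow> d < s \<Longrightarrow> 1 \<le> hmap A d"
  using hmap_pos[OF finite_A, of d] card_A by auto

lemma aseq_div_power_bounds:
  assumes "1 \<le> n" "N div s ^ r = n"
  shows "p ^ r * aseq p s A n \<le> aseq p s A N \<and> aseq p s A N + 1 \<le> p ^ r * (aseq p s A n + 1)"
  using assms(2)
proof (induction r arbitrary: N)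
  case 0 thus ?case by simp
next
  case (Suc r)
  have quotient: "N div s div s ^ r = n" using Suc.prems by (simp add: div_mult2_eq)
  note IH = Suc.IH[OF quotient]
  have "N div s \<noteq> 0" using quotient assms(1) by (metis div_0 not_one_le_zero)
  hence "s \<le> N" using s_ge2 by (metis div_less not_le)
  hence rec: "aseq p s A N = p * aseq p s A (N div s) + hmap A (N mod s)"
    by (rule aseq_div_mod[OF s_ge2])
  have "hmap A (N mod s) < p" using hmap_less s_ge2 by simp
  let ?a = "aseq p s A (N div s)"
  have "p ^ Suc r * aseq p s A n = p * (p ^ r * aseq p s A n)" by simp
  also have "\<dots> \<le> p * ?a" using IH by simp
  also have "\<dots> \<le> aseq p s A N" using rec by simp
  finally have lower: "p ^ Suc r * aseq p s A n \<le> aseq p s A N" .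
  have "aseq p s A N + 1 \<le> p * (?a + 1)" using rec \<open>hmap A (N mod s) < p\<close> by simp
  also have "\<dots> \<le> p * (p ^ r * (aseq p s A n + 1))" using IH by (intro mult_le_mono2) simp
  also have "\<dots> = p ^ Suc r * (aseq p s A n + 1)" by (simp only: power_Suc mult.assoc)
  finally show ?case using lower by simp
qed

lemma aseq_power_bounds:
  assumes "s ^ r \<le> n" "n < s ^ Suc r"
  shows "p ^ r \<le> aseq p s A n \<and> aseq p s A n + 1 \<le> p ^ Suc r"
proof -
  define d where "d = n div s ^ r"
  have spos: "0 < s ^ r" using s_ge2 by simp
  have d1: "1 \<le> d" unfolding d_def using assms(1) spos
    by (simp add: less_eq_div_iff_mult_less_eq)
  have ds: "d < s" unfolding d_def using assms(2) spos
    by (simp add: div_less_iff_less_mult mult.commute)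
  have ad: "aseq p s A d = hmap A d" using aseq_digit[OF d1 ds] .
  have bounds: "p ^ r * aseq p s A d \<le> aseq p s A n \<and> aseq p s A n + 1 \<le> p ^ r * (aseq p s A d + 1)"
    using aseq_div_power_bounds[OF d1] d_def by simp
  have "p ^ r \<le> p ^ r * aseq p s A d" using ad hmap_ge_1[OF d1 ds] by simp
  moreover have "p ^ r * (aseq p s A d + 1) \<le> p ^ r * p"
    using ad hmap_less[OF ds] by (intro mult_le_mono2) simp
  ultimately show ?thesis using bounds by (metis le_trans mult.commute power_Suc)
qed

definition \<gamma> :: real where "\<gamma> = log (real s) (real p)"

lemma s_gt_1: "1 < real s" using s_ge2 by simp
lemma p_gt_1: "1 < real p" using s_ge2 s_less_p by simp

lemma \<gamma>_gt_1: "1 < \<gamma>"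
proof -
  have "log (real s) (real s) < log (real s) (real p)" using s_gt_1 s_less_p by simp
  thus ?thesis unfolding \<gamma>_def using s_gt_1 by simp
qed

lemma power_powr_\<gamma>: "(real s ^ k) powr \<gamma> = real p ^ k"
proof -
  have "(real s ^ k) powr \<gamma> = real s powr (real k * \<gamma>)"
    using s_gt_1 by (simp add: powr_realpow[symmetric] powr_powr)
  also have "\<dots> = (real s powr \<gamma>) ^ k" using s_gt_1 by (simp add: powr_power)
  finally show ?thesis unfolding \<gamma>_def using s_gt_1 p_gt_1 by simp
qed

lemma power_le_powr_\<gamma>: "real s ^ r \<le> x \<Longrightarrow> real p ^ r \<le> x powr \<gamma>"
  using powr_mono2[of \<gamma> "real s ^ r" x] \<gamma>_gt_1 power_powr_\<gamma> by simp

lemma powr_\<gamma>_less_power: "0 \<le> x \<Longrightarrow> x < real s ^ r \<Longrightarrow> x powr \<gamma> < real p ^ r"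
  using powr_less_mono2[of \<gamma> x "real s ^ r"] \<gamma>_gt_1 power_powr_\<gamma> by simp

lemma bseq_ge: assumes "1 \<le> n" shows "1 / real p \<le> bseq p s A n"
proof -
  obtain r where r: "s ^ r \<le> n" "n < s ^ (r + 1)" using ex_power_ivl1[OF s_ge2 assms] by blast
  have "real p ^ r \<le> real (aseq p s A n)"
    using aseq_power_bounds[of r n] r by (metis of_nat_le_iff of_nat_power Suc_eq_plus1)
  moreover have "real n powr \<gamma> < real p ^ (r + 1)"
    using powr_\<gamma>_less_power[of "real n" "r + 1"] r by (metis of_nat_0_le_iff of_nat_less_iff of_nat_power)
  moreover have "0 < real n powr \<gamma>" using assms by simp
  ultimately have "real p ^ r / real p ^ (r + 1) \<le> real (aseq p s A n) / real n powr \<gamma>"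
    by (intro frac_le) auto
  thus ?thesis using p_gt_1 unfolding bseq_def \<gamma>_def by simp
qed

lemma mInf_ge: "1 / real p \<le> mInf p s A"
  unfolding mInf_def by (rule cINF_greatest) (auto intro: bseq_ge)

section \<open>Bracketing \<open>\<lambda>\<close>\<close>

definition block_index :: "real \<Rightarrow> nat \<Rightarrow> nat" where
  "block_index x k = nat \<lfloor>real s ^ k * x\<rfloor>"

definition lam_lower :: "nat \<Rightarrow> real" where
  "lam_lower n = real (aseq p s A n) / (real n + 1) powr \<gamma>"

definition lam_upper :: "nat \<Rightarrow> real" where
  "lam_upper n = (real (aseq p s A n) + 1) / real n powr \<gamma>"

definition lam_approx :: "real \<Rightarrow> nat \<Rightarrow> real" where
  "lam_approx x m = real (areal p s A (real s ^ m * x)) / (real s ^ m * x) powr \<gamma>"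

lemma lam_eq_lim: "lam p s A x = lim (lam_approx x)"
  unfolding lam_def lam_approx_def \<gamma>_def by simp

lemma block_index_bounds:
  assumes x: "x \<in> {1/real s..<1}" and k: "1 \<le> k"
  shows "s ^ (k-1) \<le> block_index x k \<and> block_index x k < s ^ k"
proof -
  have "real s ^ k = real s * real s ^ (k-1)" using k by (simp add: power_eq_if)
  hence "real (s ^ (k-1)) = real s ^ k * (1 / real s)" using s_gt_1 by simp
  also have "\<dots> \<le> real s ^ k * x" using x s_gt_1 by (intro mult_left_mono) auto
  finally have lower: "real (s ^ (k-1)) \<le> real s ^ k * x" .
  have upper: "real s ^ k * x < real (s ^ k)" using x s_gt_1 by simp
  have "0 \<le> real s ^ k * x" using x s_gt_1 by (simp add: order_trans[of 0 "1/real s" x])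
  thus ?thesis unfolding block_index_def using le_nat_floor[OF lower] nat_floor_less[OF _ upper] by simp
qed

lemma block_index_div_power:
  assumes x: "0 \<le> x" and km: "k \<le> m"
  shows "block_index x m div s ^ (m-k) = block_index x k"
proof -
  define c where "c = s ^ (m-k)"
  define n where "n = block_index x k"
  define y where "y = real s ^ k * x"
  have y0: "0 \<le> y" unfolding y_def using x by simp
  have ym: "real s ^ m * x = real c * y" unfolding c_def y_def using km
    by (simp add: power_add[symmetric])
  have n: "real n \<le> y" "y < real n + 1"
    unfolding n_def block_index_def y_def using nat_floor_bounds[OF y0[unfolded y_def]] by auto
  have c0: "0 < real c" unfolding c_def using s_ge2 by simp
  have "real (c * n) \<le> real s ^ m * x" using ym n c0 by simp
  hence lower: "c * n \<le> block_index x m" unfolding block_index_def by (rule le_nat_floor)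
  have "real c * y < real c * (real n + 1)" using n c0 by (intro mult_strict_left_mono) auto
  hence "real s ^ m * x < real (c * Suc n)" using ym by (simp add: algebra_simps)
  hence upper: "block_index x m < c * Suc n"
    unfolding block_index_def using ym y0 c0 by (intro nat_floor_less) auto
  show ?thesis using div_nat_eqI[OF lower upper] unfolding c_def n_def .
qed

lemma powr_\<gamma>_scaled_bounds:
  assumes "0 \<le> a" "a \<le> y" "y \<le> b"
  shows "real p ^ r * a powr \<gamma> \<le> (real s ^ r * y) powr \<gamma>"
    and "(real s ^ r * y) powr \<gamma> \<le> real p ^ r * b powr \<gamma>"
proof -
  have scale: "(real s ^ r * z) powr \<gamma> = real p ^ r * z powr \<gamma>" if "0 \<le> z" for z
    using that s_gt_1 by (simp add: powr_mult power_powr_\<gamma>)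
  have "a powr \<gamma> \<le> y powr \<gamma>" "y powr \<gamma> \<le> b powr \<gamma>"
    using assms \<gamma>_gt_1 by (auto intro: powr_mono2)
  thus "real p ^ r * a powr \<gamma> \<le> (real s ^ r * y) powr \<gamma>"
    and "(real s ^ r * y) powr \<gamma> \<le> real p ^ r * b powr \<gamma>"
    using assms p_gt_1 by (simp_all add: scale)
qed

lemma lam_approx_bounds:
  assumes x: "x \<in> {1/real s..<1}" and k: "1 \<le> k" and km: "k \<le> m"
  shows "lam_lower (block_index x k) \<le> lam_approx x m \<and> lam_approx x m \<le> lam_upper (block_index x k)"
proof -
  define r where "r = m - k"
  define n where "n = block_index x k"
  define y where "y = real s ^ k * x"
  have x0: "0 \<le> x" using x s_gt_1 by (simp add: order_trans[of 0 "1/real s" x])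
  have "1 \<le> s ^ (k-1)" using s_ge2 by simp
  hence n1: "1 \<le> n" using block_index_bounds[OF x k] unfolding n_def by linarith
  have "block_index x m div s ^ r = n" unfolding n_def r_def using block_index_div_power[OF x0 km] .
  note bounds = aseq_div_power_bounds[OF n1 this]
  have "real (p ^ r * aseq p s A n) \<le> real (aseq p s A (block_index x m))"
    "real (aseq p s A (block_index x m) + 1) \<le> real (p ^ r * (aseq p s A n + 1))"
    using bounds by (simp_all only: of_nat_le_iff)
  hence num: "real p ^ r * real (aseq p s A n) \<le> real (aseq p s A (block_index x m))"
     "real (aseq p s A (block_index x m)) \<le> real p ^ r * (real (aseq p s A n) + 1)"
    by (simp_all add: algebra_simps)
  have y0: "0 \<le> y" unfolding y_def using x0 by simp
  have ny: "real n \<le> y" "y \<le> real n + 1"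
    unfolding n_def block_index_def y_def using nat_floor_bounds[OF y0[unfolded y_def]] by auto
  have sm: "real s ^ m * x = real s ^ r * y" unfolding r_def y_def using km
    by (simp add: power_add[symmetric])
  note den = powr_\<gamma>_scaled_bounds[OF _ ny(1) order.refl, of r] powr_\<gamma>_scaled_bounds[OF y0 order.refl ny(2), of r]
  have approx: "lam_approx x m = real (aseq p s A (block_index x m)) / (real s ^ r * y) powr \<gamma>"
    unfolding lam_approx_def areal_def block_index_def sm ..
  have pos: "0 < real p ^ r" "0 < real n powr \<gamma>" using p_gt_1 n1 by auto
  hence "0 < real p ^ r * real n powr \<gamma>" by simp
  hence "0 < (real s ^ r * y) powr \<gamma>" using den(1) by linarith
  have "lam_approx x m \<le> (real p ^ r * (real (aseq p s A n) + 1)) / (real p ^ r * real n powr \<gamma>)"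
    unfolding approx using num den pos \<open>0 < (real s ^ r * y) powr \<gamma>\<close> by (intro frac_le) auto
  also have "\<dots> = lam_upper n" unfolding lam_upper_def using pos by simp
  finally have "lam_approx x m \<le> lam_upper n" .
  moreover have "lam_lower n = (real p ^ r * real (aseq p s A n)) / (real p ^ r * (real n + 1) powr \<gamma>)"
    unfolding lam_lower_def using pos p_gt_1 by simp
  moreover have "\<dots> \<le> lam_approx x m"
    unfolding approx using num den pos \<open>0 < (real s ^ r * y) powr \<gamma>\<close> by (intro frac_le) auto
  ultimately show ?thesis unfolding n_def by simp
qed

lemma lam_bracket_width:
  assumes x: "x \<in> {1/real s..<1}" and k: "1 \<le> k"
  shows "lam_upper (block_index x k) - lam_lower (block_index x k) \<le> (1 + p * nat \<lceil>\<gamma>\<rceil>) / real (block_index x k)"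
proof -
  define n where "n = block_index x k"
  have r: "s ^ (k-1) \<le> n" "n < s ^ Suc (k-1)" using block_index_bounds[OF x k] k unfolding n_def by auto
  have "1 \<le> s ^ (k-1)" using s_ge2 by simp
  hence n1: "1 \<le> n" using r(1) by linarith
  have "real (aseq p s A n + 1) \<le> real (p ^ Suc (k-1))"
    using aseq_power_bounds[OF r] by (simp only: of_nat_le_iff)
  hence "real (aseq p s A n) \<le> real p * real p ^ (k-1)" by simp
  also have "real (s ^ (k-1)) \<le> real n" using r(1) by (simp only: of_nat_le_iff)
  hence "real p ^ (k-1) \<le> real n powr \<gamma>" using power_le_powr_\<gamma> by simp
  hence "real p * real p ^ (k-1) \<le> real p * real n powr \<gamma>" using p_gt_1 by (intro mult_left_mono) auto
  finally have "real (aseq p s A n) \<le> real p * real n powr \<gamma>" .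
  hence "(real (aseq p s A n) + 1) / real n powr \<gamma> - real (aseq p s A n) / (real n + 1) powr \<gamma>
      \<le> (1 + p * nat \<lceil>\<gamma>\<rceil>) / real n"
    using quotient_gap_le[of "real n" "real (aseq p s A n)" p \<gamma> "nat \<lceil>\<gamma>\<rceil>"] n1 \<gamma>_gt_1 by simp
  thus ?thesis unfolding lam_upper_def lam_lower_def n_def .
qed

lemma convergent_lam_approx:
  assumes x: "x \<in> {1/real s..<1}"
  shows "convergent (lam_approx x)"
proof -
  have "Cauchy (lam_approx x)"
  proof (rule CauchyI)
    fix e :: real assume e: "0 < e"
    define C where "C = real (1 + p * nat \<lceil>\<gamma>\<rceil>)"
    obtain M where M: "C / e < real s ^ M" using real_arch_pow[OF s_gt_1] by blast
    define n where "n = block_index x (Suc M)"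
    have "s ^ M \<le> n" using block_index_bounds[OF x, of "Suc M"] unfolding n_def by simp
    hence "real (s ^ M) \<le> real n" by (simp only: of_nat_le_iff)
    hence "real s ^ M \<le> real n" by simp
    moreover have "0 < real s ^ M" using s_gt_1 by simp
    ultimately have "C / real n \<le> C / real s ^ M"
      unfolding C_def by (intro frac_le) auto
    also have "\<dots> < e" using M e s_gt_1 by (simp add: divide_less_eq mult.commute)
    finally have width: "lam_upper n - lam_lower n < e"
      using lam_bracket_width[OF x, of "Suc M"] unfolding C_def n_def by linarith
    show "\<exists>M. \<forall>m\<ge>M. \<forall>n\<ge>M. norm (lam_approx x m - lam_approx x n) < e"
    proof (intro exI allI impI)
      fix m m' assume "Suc M \<le> m" "Suc M \<le> m'"
      hence "lam_approx x m \<in> {lam_lower n..lam_upper n}" "lam_approx x m' \<in> {lam_lower n..lam_upper n}"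
        using lam_approx_bounds[OF x, of "Suc M"] unfolding n_def by auto
      thus "norm (lam_approx x m - lam_approx x m') < e" using width by auto
    qed
  qed
  thus ?thesis by (simp add: Cauchy_convergent_iff)
qed

lemma lam_bracket:
  assumes x: "x \<in> {1/real s..<1}" and k: "1 \<le> k"
  shows "lam_lower (block_index x k) \<le> lam p s A x \<and> lam p s A x \<le> lam_upper (block_index x k)"
proof -
  have lim: "lam_approx x \<longlonglongrightarrow> lam p s A x"
    using convergent_lam_approx[OF x] unfolding lam_eq_lim by (simp add: convergent_LIMSEQ_iff)
  have "lam_lower (block_index x k) \<le> lam p s A x"
    using lim by (rule LIMSEQ_le_const) (use lam_approx_bounds[OF x k] in auto)
  moreover have "lam p s A x \<le> lam_upper (block_index x k)"
    using lim by (rule LIMSEQ_le_const2) (use lam_approx_bounds[OF x k] in auto)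
  ultimately show ?thesis by simp
qed

section \<open>Counting bad blocks\<close>

lemma aseq_less_add_power:
  assumes "s ^ r \<le> n" "n div s ^ r = n' div s ^ r"
  shows "aseq p s A n' + 1 \<le> aseq p s A n + p ^ r"
proof -
  define q where "q = n div s ^ r"
  have "0 < s ^ r" using s_ge2 by simp
  hence q1: "1 \<le> q" unfolding q_def using assms(1) by (simp add: less_eq_div_iff_mult_less_eq)
  have "p ^ r * aseq p s A q \<le> aseq p s A n"
    using aseq_div_power_bounds[OF q1, of n r] unfolding q_def by blast
  moreover have "aseq p s A n' + 1 \<le> p ^ r * aseq p s A q + p ^ r"
    using aseq_div_power_bounds[OF q1, of n' r] assms(2) unfolding q_def by (simp add: distrib_left)
  ultimately show ?thesis by linarith
qed

definition bad_blocks :: "real \<Rightarrow> nat \<Rightarrow> nat set" where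
  "bad_blocks \<alpha> k = {n. s ^ (k-1) \<le> n \<and> n < s ^ k \<and> lam_lower n \<le> \<alpha> \<and> \<alpha> < lam_upper n}"

lemma finite_bad_blocks: "finite (bad_blocks \<alpha> k)"
  unfolding bad_blocks_def by (rule finite_subset[of _ "{..<s^k}"]) auto

lemma bad_blocks_gap:
  assumes \<alpha>: "0 < \<alpha>" and r: "r < k"
    and n: "n \<in> bad_blocks \<alpha> k" and n': "n' \<in> bad_blocks \<alpha> k" and nn': "n < n'"
    and q: "n div s ^ r = n' div s ^ r"
  shows "real n' - real n - 1 < real p ^ r / (\<alpha> * (real p / real s) ^ (k-1))"
proof -
  define u where "u = real n + 1"
  define \<theta> where "\<theta> = (real p / real s) ^ (k-1)"
  have n_ge: "s ^ (k-1) \<le> n" using n unfolding bad_blocks_def by simp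
  have "s ^ r \<le> s ^ (k-1)" using r s_ge2 by (intro power_increasing) auto
  hence "real (aseq p s A n' + 1) \<le> real (aseq p s A n + p ^ r)"
    using aseq_less_add_power[OF _ q] n_ge by (simp only: of_nat_le_iff)
  moreover have "\<alpha> * real n' powr \<gamma> < real (aseq p s A n') + 1"
  proof -
    have "0 < real n' powr \<gamma>" using nn' by simp
    thus ?thesis using n' unfolding bad_blocks_def lam_upper_def by (simp add: pos_less_divide_eq)
  qed
  moreover have "real (aseq p s A n) \<le> \<alpha> * u powr \<gamma>"
  proof -
    have "0 < u powr \<gamma>" unfolding u_def by simp
    thus ?thesis using n unfolding bad_blocks_def lam_lower_def u_def by (simp add: pos_divide_le_eq)
  qed
  ultimately have growth: "\<alpha> * (real n' powr \<gamma> - u powr \<gamma>) < real p ^ r"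
    by (simp add: algebra_simps)
  have "real (s ^ (k-1)) \<le> real n" using n_ge by (simp only: of_nat_le_iff)
  hence "real s ^ (k-1) \<le> u" unfolding of_nat_power u_def by linarith
  hence "(real s ^ (k-1)) powr (\<gamma> - 1) \<le> u powr (\<gamma> - 1)"
    using \<gamma>_gt_1 by (intro powr_mono2) auto
  moreover have "(real s ^ (k-1)) powr (\<gamma> - 1) = \<theta>"
    unfolding \<theta>_def using s_gt_1 by (simp add: powr_diff power_powr_\<gamma> power_divide)
  ultimately have \<theta>: "\<theta> \<le> u powr (\<gamma> - 1)" by simp
  have d0: "0 \<le> real n' - u" unfolding u_def using nn' by simp
  have "\<alpha> * ((real n' - u) * \<theta>) \<le> \<alpha> * ((real n' - u) * u powr (\<gamma> - 1))"
    using \<theta> d0 \<alpha> by (intro mult_left_mono) auto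
  also have "\<dots> \<le> \<alpha> * (real n' powr \<gamma> - u powr \<gamma>)"
    using powr_diff_ge[of u "real n'" \<gamma>] d0 \<gamma>_gt_1 \<alpha> unfolding u_def by (intro mult_left_mono) auto
  finally have "(real n' - u) * (\<alpha> * \<theta>) < real p ^ r" using growth by (simp add: algebra_simps)
  moreover have "0 < \<alpha> * \<theta>" unfolding \<theta>_def using \<alpha> s_gt_1 p_gt_1 by simp
  ultimately show ?thesis unfolding \<theta>_def u_def by (simp add: pos_less_divide_eq diff_diff_eq)
qed

lemma card_bad_blocks_le:
  assumes \<alpha>: "0 < \<alpha>" and r: "r < k"
  shows "real (card (bad_blocks \<alpha> k)) \<le> real s ^ (k - r) * (real p ^ r / (\<alpha> * (real p / real s) ^ (k-1)) + 2)"
proof -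
  define D where "D = real p ^ r / (\<alpha> * (real p / real s) ^ (k-1))"
  define C where "C q = {n \<in> bad_blocks \<alpha> k. n div s ^ r = q}" for q
  have "bad_blocks \<alpha> k \<subseteq> (\<Union>q<s^(k-r). C q)"
  proof
    fix n assume n: "n \<in> bad_blocks \<alpha> k"
    moreover have "s ^ k = s ^ r * s ^ (k-r)" using r by (simp flip: power_add)
    ultimately have "n < s ^ r * s ^ (k-r)" unfolding bad_blocks_def by simp
    hence "n div s ^ r < s ^ (k-r)" using s_ge2 by (simp add: div_less_iff_less_mult mult.commute)
    thus "n \<in> (\<Union>q<s^(k-r). C q)" using n unfolding C_def by auto
  qed
  hence "card (bad_blocks \<alpha> k) \<le> card (\<Union>q<s^(k-r). C q)"
    by (intro card_mono) (auto simp: C_def finite_bad_blocks)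
  also have "\<dots> \<le> (\<Sum>q<s^(k-r). card (C q))" by (rule card_UN_le) simp
  finally have "real (card (bad_blocks \<alpha> k)) \<le> (\<Sum>q<s^(k-r). real (card (C q)))"
    by (simp only: of_nat_sum[symmetric] of_nat_le_iff)
  also have "\<dots> \<le> (\<Sum>q<s^(k-r). D + 2)"
  proof (intro sum_mono card_le_of_spread)
    show "0 \<le> D" unfolding D_def using \<alpha> by simp
    show "finite (C q)" for q unfolding C_def using finite_bad_blocks by simp
    show "real b - real a - 1 < D" if "a \<in> C q" "b \<in> C q" "a < b" for q a b
      using that bad_blocks_gap[OF \<alpha> r] unfolding C_def D_def by auto
  qed
  finally show ?thesis unfolding D_def by simp
qed

lemma card_bad_blocks_small:
  assumes \<alpha>: "0 < \<alpha>" and \<epsilon>: "0 < \<epsilon>"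
  shows "\<exists>k\<ge>1. real (card (bad_blocks \<alpha> k)) \<le> \<epsilon> * real s ^ k"
proof -
  have "real s / real p < 1" using s_less_p s_ge2 by simp
  then obtain i where i: "(real s / real p) ^ i < \<epsilon> * \<alpha> / 2"
    using real_arch_pow_inv[of "\<epsilon> * \<alpha> / 2" "real s / real p"] \<alpha> \<epsilon> by auto
  obtain r where r: "4 / \<epsilon> < real s ^ r" using real_arch_pow[OF s_gt_1] by blast
  define k where "k = Suc i + r"
  have pos: "0 < real s" "0 < real p" using s_gt_1 p_gt_1 by auto
  have "real s ^ (k - r) * (real p ^ r / (\<alpha> * (real p / real s) ^ (k-1)))
      = real s ^ k * (real s / real p) ^ i / \<alpha>"
    unfolding k_def using pos \<alpha> by (simp add: power_add power_divide field_simps)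
  also have "\<dots> \<le> real s ^ k * (\<epsilon> * \<alpha> / 2) / \<alpha>"
    using i \<alpha> pos by (intro divide_right_mono mult_left_mono) auto
  also have "\<dots> = \<epsilon> / 2 * real s ^ k" using \<alpha> by simp
  finally have main: "real s ^ (k - r) * (real p ^ r / (\<alpha> * (real p / real s) ^ (k-1))) \<le> \<epsilon> / 2 * real s ^ k" .
  have "4 < \<epsilon> * real s ^ r" using r \<epsilon> by (simp add: divide_less_eq mult.commute)
  hence "real s ^ (k - r) * 4 \<le> real s ^ (k - r) * (\<epsilon> * real s ^ r)" using pos by simp
  hence rest: "real s ^ (k - r) * 2 \<le> \<epsilon> / 2 * real s ^ k" unfolding k_def by (simp add: power_add algebra_simps)
  have "r < k" unfolding k_def by simp
  from card_bad_blocks_le[OF \<alpha> this]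
  have "real (card (bad_blocks \<alpha> k))
      \<le> real s ^ (k - r) * (real p ^ r / (\<alpha> * (real p / real s) ^ (k-1))) + real s ^ (k - r) * 2"
    by (simp only: distrib_left)
  hence "real (card (bad_blocks \<alpha> k)) \<le> \<epsilon> * real s ^ k" using main rest by linarith
  moreover have "1 \<le> k" unfolding k_def by simp
  ultimately show ?thesis by blast
qed

lemma lam_borel: "lam p s A \<in> borel_measurable borel"
proof -
  have "(\<lambda>x. lam_approx x k) \<in> borel_measurable borel" for k
    unfolding lam_approx_def areal_def by measurable
  hence "(\<lambda>x. lim (\<lambda>k. lam_approx x k)) \<in> borel_measurable borel"
    by (rule borel_measurable_lim_metric)
  thus ?thesis unfolding lam_eq_lim[abs_def] .
qed

lemma Eset_borel: "Eset p s A \<alpha> \<in> sets borel"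
proof -
  have "Eset p s A \<alpha> = {1/real s..<1} \<inter> {x \<in> space borel. lam p s A x \<le> \<alpha>}"
    unfolding Eset_def by auto
  thus ?thesis using borel_measurable_le[OF lam_borel borel_measurable_const] by simp
qed

lemma indicator_Eset_div_bound:
  assumes "x \<in> {1/real s..1}" shows "\<bar>indicator (Eset p s A \<alpha>) x / x\<bar> \<le> real s"
proof -
  have "0 < 1 / real s" using s_gt_1 by simp
  moreover have "1 / real s \<le> x" using assms by simp
  ultimately have x: "0 < x" by linarith
  hence "\<bar>indicator (Eset p s A \<alpha>) x / x\<bar> \<le> 1 / x" by (simp add: indicator_def)
  also have "\<dots> \<le> real s" using \<open>1 / real s \<le> x\<close> x s_gt_1 by (simp add: field_simps)
  finally show ?thesis .
qed

lemma indicator_Eset_div_integrable: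
  "(\<lambda>x. indicator (Eset p s A \<alpha>) x / x) integrable_on {1/real s..1}"
proof (rule measurable_bounded_by_integrable_imp_integrable_real)
  have "(\<lambda>x. indicator (Eset p s A \<alpha>) x / x :: real) \<in> borel_measurable borel"
    using borel_measurable_indicator[OF Eset_borel] by measurable
  thus "(\<lambda>x. indicator (Eset p s A \<alpha>) x / x :: real) \<in> borel_measurable (lebesgue_on {1/real s..1})"
    by (intro measurable_restrict_space1 measurable_completion) simp
  show "(\<lambda>x. real s) integrable_on {1/real s..1}" by (rule integrable_const_ivl)
  show "{1/real s..1} \<in> sets lebesgue" by simp
  show "\<bar>indicator (Eset p s A \<alpha>) x / x\<bar> \<le> real s" if "x \<in> {1/real s..1}" for x
    using that by (rule indicator_Eset_div_bound)
qed

lemma same_block: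
  assumes y: "y \<in> {1/real s..<1}" and k: "1 \<le> k"
    and t: "real (block_index y k) \<le> real s ^ k * t" "real s ^ k * t < real (block_index y k) + 1"
  shows "t \<in> {1/real s..<1}" and "block_index t k = block_index y k"
proof -
  define n where "n = block_index y k"
  define K where "K = real s ^ k"
  have K: "0 < K" unfolding K_def using s_gt_1 by simp
  have "s ^ (k-1) \<le> n" "n + 1 \<le> s ^ k" using block_index_bounds[OF y k] unfolding n_def by auto
  hence n: "real (s ^ (k-1)) \<le> real n" "real (n + 1) \<le> real (s ^ k)" by (simp_all only: of_nat_le_iff)
  have "K * (1 / real s) = real s ^ (k-1)"
    unfolding K_def using k s_gt_1 by (simp add: power_eq_if)
  also have "\<dots> \<le> K * t" using n(1) t(1) unfolding n_def[symmetric] K_def of_nat_power by linarith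
  finally have "1 / real s \<le> t" using K by (simp only: mult_le_cancel_left_pos)
  moreover have "K * t < K * 1" using n(2) t(2) unfolding n_def[symmetric] K_def of_nat_power by simp
  hence "t < 1" using K by (simp only: mult_less_cancel_left_pos)
  ultimately show "t \<in> {1/real s..<1}" by simp
  have "\<lfloor>real s ^ k * t\<rfloor> = int n" using t unfolding n_def by (intro floor_unique) auto
  thus "block_index t k = block_index y k" unfolding block_index_def n_def by simp
qed

lemma Eset_constant_on_good_block:
  assumes y: "y \<in> {1/real s..<1}" and k: "1 \<le> k" and good: "block_index y k \<notin> bad_blocks \<alpha> k"
    and t: "real (block_index y k) \<le> real s ^ k * t" "real s ^ k * t < real (block_index y k) + 1"
  shows "t \<in> Eset p s A \<alpha> \<longleftrightarrow> y \<in> Eset p s A \<alpha>"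
proof -
  define n where "n = block_index y k"
  have "\<not> (lam_lower n \<le> \<alpha> \<and> \<alpha> < lam_upper n)"
    using good block_index_bounds[OF y k] unfolding n_def bad_blocks_def by auto
  moreover have "lam p s A t \<in> {lam_lower n..lam_upper n}" "lam p s A y \<in> {lam_lower n..lam_upper n}"
    using lam_bracket[OF same_block(1)[OF y k t] k] lam_bracket[OF y k] same_block(2)[OF y k t]
    unfolding n_def by auto
  ultimately show ?thesis using same_block(1)[OF y k t] y unfolding Eset_def by auto
qed

definition exceptional_set :: "real \<Rightarrow> nat \<Rightarrow> real \<Rightarrow> real set" where
  "exceptional_set \<alpha> k \<delta> =
     (\<Union>n\<in>bad_blocks \<alpha> k. {real n / real s ^ k - \<delta> .. (real n + 1) / real s ^ k + \<delta>})
     \<union> (\<Union>n\<le>s ^ k. {real n / real s ^ k - \<delta> .. real n / real s ^ k + \<delta>})"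

lemma exceptional_set_lmeasurable: "exceptional_set \<alpha> k \<delta> \<in> lmeasurable"
  unfolding exceptional_set_def using finite_bad_blocks
  by (intro fmeasurable.Un fmeasurable.finite_UN) auto

lemma measure_exceptional_set:
  assumes "0 \<le> \<delta>"
  shows "measure lebesgue (exceptional_set \<alpha> k \<delta>)
    \<le> real (card (bad_blocks \<alpha> k)) * (1 / real s ^ k + 2 * \<delta>) + (real s ^ k + 1) * (2 * \<delta>)"
proof -
  have len: "measure lebesgue {l..u} = u - l" if "l \<le> u" for l u :: real
    using that by (simp add: measure_completion)
  have "measure lebesgue (exceptional_set \<alpha> k \<delta>)
      \<le> (\<Sum>n\<in>bad_blocks \<alpha> k. measure lebesgue {real n / real s ^ k - \<delta> .. (real n + 1) / real s ^ k + \<delta>})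
        + (\<Sum>n\<le>s ^ k. measure lebesgue {real n / real s ^ k - \<delta> .. real n / real s ^ k + \<delta>})"
    unfolding exceptional_set_def using finite_bad_blocks
    by (intro order_trans[OF measure_Un_le] add_mono measure_UNION_le) (auto intro!: sets.finite_UN)
  also have "\<dots> = real (card (bad_blocks \<alpha> k)) * (1 / real s ^ k + 2 * \<delta>) + (real s ^ k + 1) * (2 * \<delta>)"
    using assms s_gt_1 by (simp add: len add_divide_distrib)
  finally show ?thesis .
qed

lemma Eset_constant_off_exceptional_set:
  assumes k: "1 \<le> k" and y: "y \<in> {1/real s..1} - exceptional_set \<alpha> k \<delta>" and ty: "\<bar>t - y\<bar> < \<delta>"
  shows "t \<in> Eset p s A \<alpha> \<longleftrightarrow> y \<in> Eset p s A \<alpha>"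
proof -
  define K where "K = real s ^ k"
  have K: "0 < K" unfolding K_def using s_gt_1 by simp
  have near_grid: "\<bar>y - real m / K\<bar> > \<delta>" if "m \<le> s ^ k" for m
    using y that unfolding exceptional_set_def K_def by force
  have "y \<noteq> 1" using near_grid[of "s ^ k"] ty K unfolding K_def by auto
  hence y': "y \<in> {1/real s..<1}" using y by auto
  define n where "n = block_index y k"
  have "n < s ^ k" using block_index_bounds[OF y' k] unfolding n_def by simp
  have "real n \<le> K * y" "K * y < real n + 1"
    using nat_floor_bounds[of "K * y"] y' K s_gt_1 unfolding n_def block_index_def K_def
    by (auto simp: order_trans[of 0 "1/real s" y])
  hence block: "real n / K \<le> y" "y < (real n + 1) / K" using K by (simp_all add: field_simps)
  have "0 < \<delta>" using ty by linarith
  hence "y \<in> {real n / K - \<delta> .. (real n + 1) / K + \<delta>}" using block by auto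
  hence "n \<notin> bad_blocks \<alpha> k" using y unfolding exceptional_set_def K_def by blast
  moreover have "real n / K < t" "t < (real n + 1) / K"
    using near_grid[of n] near_grid[of "Suc n"] block ty \<open>n < s ^ k\<close> by (auto simp: add.commute)
  hence "real n \<le> real s ^ k * t" "real s ^ k * t < real n + 1"
    using K unfolding K_def by (simp_all add: field_simps)
  ultimately show ?thesis using Eset_constant_on_good_block[OF y' k] unfolding n_def by blast
qed

lemma indicator_Eset_div_oscillation:
  assumes k: "1 \<le> k" and t: "t \<in> {1/real s..1}"
    and y: "y \<in> {1/real s..1} - exceptional_set \<alpha> k \<delta>" and ty: "\<bar>t - y\<bar> < \<delta>"
  shows "\<bar>indicator (Eset p s A \<alpha>) t / t - indicator (Eset p s A \<alpha>) y / y\<bar> \<le> (real s)\<^sup>2 * \<delta>"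
proof -
  have "\<bar>indicator (Eset p s A \<alpha>) t / t - indicator (Eset p s A \<alpha>) y / y\<bar> \<le> \<bar>t - y\<bar> / (1 / real s)\<^sup>2"
    using t y s_gt_1 Eset_constant_off_exceptional_set[OF k y ty]
    by (intro indicator_div_diff_le) auto
  also have "\<dots> = (real s)\<^sup>2 * \<bar>t - y\<bar>" by (simp add: power_divide)
  also have "\<dots> \<le> (real s)\<^sup>2 * \<delta>" using ty by (intro mult_left_mono) auto
  finally show ?thesis .
qed

lemma exceptional_set_small:
  assumes \<alpha>: "0 < \<alpha>" and e: "0 < e"
  shows "\<exists>k\<ge>1. \<exists>\<delta>>0. (real s)\<^sup>2 * \<delta> \<le> e \<and> measure lebesgue (exceptional_set \<alpha> k \<delta>) \<le> e"
proof -
  obtain k where k: "1 \<le> k" and card: "real (card (bad_blocks \<alpha> k)) \<le> e / 2 * real s ^ k"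
    using card_bad_blocks_small[OF \<alpha>, of "e / 2"] e by auto
  define K where "K = real s ^ k"
  define c where "c = real (card (bad_blocks \<alpha> k))"
  define \<delta> where "\<delta> = min (e / (real s)\<^sup>2) (e / (4 * (c + K + 1)))"
  have K: "0 < K" unfolding K_def using s_gt_1 by simp
  have c: "0 \<le> c" unfolding c_def by simp
  have "\<delta> \<le> e / (real s)\<^sup>2" "\<delta> \<le> e / (4 * (c + K + 1))" unfolding \<delta>_def by auto
  moreover have "0 < (real s)\<^sup>2" "0 < 4 * (c + K + 1)" using s_gt_1 K c by auto
  ultimately have \<delta>: "(real s)\<^sup>2 * \<delta> \<le> e" "4 * ((c + K + 1) * \<delta>) \<le> e"
    by (simp_all add: pos_le_divide_eq mult.commute mult.left_commute)
  have \<delta>0: "0 < \<delta>" unfolding \<delta>_def using e K c s_gt_1 by simp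
  have "measure lebesgue (exceptional_set \<alpha> k \<delta>) \<le> c * (1 / K + 2 * \<delta>) + (K + 1) * (2 * \<delta>)"
    using measure_exceptional_set[of \<delta> \<alpha> k] \<delta>0 unfolding c_def K_def by simp
  also have "\<dots> = c / K + 2 * ((c + K + 1) * \<delta>)" by (simp add: algebra_simps)
  also have "\<dots> \<le> e"
  proof -
    have "c / K \<le> e / 2" using card K unfolding c_def[symmetric] K_def[symmetric] by (simp add: divide_le_eq)
    thus ?thesis using \<delta>(2) by linarith
  qed
  finally show ?thesis using k \<delta>0 \<delta>(1) by blast
qed

lemma riemann_integrable_indicator_Eset_div:
  assumes \<alpha>: "0 < \<alpha>"
  shows "riemann_integrable (\<lambda>x. indicator (Eset p s A \<alpha>) x / x) (1 / real s) 1"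
proof (rule riemann_integrable_if_oscillation_small[where B = "real s"])
  show "1 / real s < 1" using s_gt_1 by simp
  show "(\<lambda>x. indicator (Eset p s A \<alpha>) x / x) integrable_on {1/real s..1}"
    by (rule indicator_Eset_div_integrable)
  show "\<bar>indicator (Eset p s A \<alpha>) x / x\<bar> \<le> real s" if "x \<in> {1/real s..1}" for x
    using that by (rule indicator_Eset_div_bound)
  fix e :: real assume "0 < e"
  then obtain k \<delta> where k: "1 \<le> k" and \<delta>: "0 < \<delta>" "(real s)\<^sup>2 * \<delta> \<le> e"
    and small: "measure lebesgue (exceptional_set \<alpha> k \<delta>) \<le> e"
    using exceptional_set_small[OF \<alpha>] by blast
  have "\<bar>indicator (Eset p s A \<alpha>) t / t - indicator (Eset p s A \<alpha>) y / y\<bar> \<le> e"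
    if "t \<in> {1/real s..1}" "y \<in> {1/real s..1} - exceptional_set \<alpha> k \<delta>" "\<bar>t - y\<bar> < \<delta>" for t y
    using indicator_Eset_div_oscillation[OF k that] \<delta>(2) by linarith
  thus "\<exists>\<delta>>0. \<exists>U\<in>lmeasurable. measure lebesgue U \<le> e \<and>
      (\<forall>t\<in>{1/real s..1}. \<forall>y\<in>{1/real s..1} - U. \<bar>t - y\<bar> < \<delta> \<longrightarrow>
        \<bar>indicator (Eset p s A \<alpha>) t / t - indicator (Eset p s A \<alpha>) y / y\<bar> \<le> e)"
    using \<delta>(1) exceptional_set_lmeasurable small by blast
qed

end

theorem mainTheorem14:
  fixes p s :: nat and A :: "nat set" and \<alpha> :: real
  assumes "3 \<le> p" and "2 \<le> s" and "s < p"
    and "A \<subseteq> {0..<p}" and "card A = s"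
    and "\<alpha> \<in> {mInf p s A .. MSup p s A}"
  shows "riemann_integrable (\<lambda>x. indicator (Eset p s A \<alpha>) x / x) (1 / real s) 1"
proof -
  \<comment> \<open>Only \<open>\<alpha> \<ge> m > 0\<close> matters.\<close>
  interpret digit_substitution p s A
    using assms(2-5) by unfold_locales
  have "0 < 1 / real p" using p_gt_1 by simp
  also have "\<dots> \<le> \<alpha>" using mInf_ge assms(6) by simp
  finally show ?thesis by (rule riemann_integrable_indicator_Eset_div)
qed

end
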